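(* Let $S$ be a finite set of distinct lines in the plane, each having one of three distinct slopes, such that no point lies on three lines of $S$. Let $x\ge y\ge z$ be the numbers of lines of $S$ in the three slope classes. Consider the following greedy algorithm: while there exists a point at which two not-yet-hit lines of $S$ cross, choose such a point whose two lines belong to the two slope classes currently having the largest numbers of unhit lines, and mark these two lines as hit; afterwards, place one point on each remaining unhit line. This algorithm produces a minimum-cardinality hitting set for $S$, and the minimum number of points in a hitting set for $S$ is $$OPT_2(x,y,z)=\begin{cases} x & \text{if } x\ge y+z,\\ \lceil (x+y+z)/2\rceil & \text{if } x<y+z.\end{cases}$$
   Context: A hitting set for a set of lines is a finite set of points such that every line contains at least one of the points. *)

theory Defs
  imports Complex_Main
begin

type_synonym point = "real \<times> real"

definition is_line :: "point set \<Rightarrow> bool" where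
  "is_line L \<longleftrightarrow> (\<exists>a b c. (a, b) \<noteq> (0, 0) \<and> L = {(x, y). a * x + b * y = c})"

text \<open>The slope (direction) of a line: the set of difference vectors of its points.
  Two lines have the same slope iff they have the same direction.\<close>
definition dir :: "point set \<Rightarrow> point set" where
  "dir L = {(fst p - fst q, snd p - snd q) | p q. p \<in> L \<and> q \<in> L}"

definition hitting_set :: "point set \<Rightarrow> point set set \<Rightarrow> bool" where
  "hitting_set H S \<longleftrightarrow> finite H \<and> (\<forall>L\<in>S. H \<inter> L \<noteq> {})"

definition cnt :: "point set set \<Rightarrow> point set \<Rightarrow> nat" where
  "cnt U D = card {L \<in> U. dir L = D}"

definition OPT2 :: "nat \<Rightarrow> nat \<Rightarrow> nat \<Rightarrow> nat" where
  "OPT2 x y z = (if x \<ge> y + z then x else nat \<lceil>real (x + y + z) / 2\<rceil>)"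

text \<open>Runs of the (nondeterministic) greedy algorithm on the line set S.
  greedy_run S U H Out: starting with unhit lines U and chosen points H, the algorithm
  can terminate with output Out.  In a step, a crossing point p of two unhit lines L1, L2
  is chosen whose slope classes are the two classes with the largest numbers of unhit
  lines (ties broken arbitrarily), i.e. every other slope class has at most as many unhit
  lines as each of them.\<close>
inductive greedy_run :: "point set set \<Rightarrow> point set set \<Rightarrow> point set \<Rightarrow> point set \<Rightarrow> bool"
  for S :: "point set set" where
  finish: "\<not> (\<exists>p L1 L2. L1 \<in> U \<and> L2 \<in> U \<and> L1 \<noteq> L2 \<and> p \<in> L1 \<and> p \<in> L2) \<Longrightarrow>
           (\<forall>L\<in>U. f L \<in> L) \<Longrightarrow> greedy_run S U H (H \<union> f ` U)"
| step: "L1 \<in> U \<Longrightarrow> L2 \<in> U \<Longrightarrow> L1 \<noteq> L2 \<Longrightarrow> p \<in> L1 \<Longrightarrow> p \<in> L2 \<Longrightarrow>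
         (\<forall>D\<in>dir ` S. D \<noteq> dir L1 \<longrightarrow> D \<noteq> dir L2 \<longrightarrow>
              cnt U D \<le> cnt U (dir L1) \<and> cnt U D \<le> cnt U (dir L2)) \<Longrightarrow>
         greedy_run S (U - {L1, L2}) (insert p H) Out \<Longrightarrow> greedy_run S U H Out"

end

theory Submission
  imports Defs
begin

text \<open>A point lies on at most one line of each slope class and, by hypothesis, on at most two
  lines in total, so every hitting set has at least max(x, y, z, \<lceil>(x+y+z)/2\<rceil>) points.
  Conversely, hitting the crossing point of one line from each of the two largest classes lowers
  this quantity by exactly one, and such a crossing exists as long as two classes are nonempty,
  since lines of different slopes meet.  When the greedy steps stop, at most one class is left,
  where the bound equals the number of remaining lines, each hit by its own point.\<close>

lemma line_equation_nonempty:
  assumes "(a, b) \<noteq> ((0::real), (0::real))"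
  shows "{(x, y). a * x + b * y = c} \<noteq> {}"
proof (cases "a = 0")
  case True
  then have "(0, c / b) \<in> {(x, y). a * x + b * y = c}" using assms by auto
  then show ?thesis by blast
next
  case False
  then have "(c / a, 0) \<in> {(x, y). a * x + b * y = c}" by auto
  then show ?thesis by blast
qed

lemma line_nonempty: "is_line L \<Longrightarrow> L \<noteq> {}"
  unfolding is_line_def using line_equation_nonempty by blast

lemma dir_line:
  assumes "(a, b) \<noteq> ((0::real), (0::real))" and "L = {(x, y). a * x + b * y = c}"
  shows "dir L = {(u, v). a * u + b * v = 0}"
proof
  show "dir L \<subseteq> {(u, v). a * u + b * v = 0}"
    unfolding dir_def assms(2) by (auto simp: algebra_simps)
next
  obtain p where p: "p \<in> L" using line_equation_nonempty[OF assms(1)] assms(2) by blast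
  show "{(u, v). a * u + b * v = 0} \<subseteq> dir L"
  proof clarify
    fix u v assume "a * u + b * v = 0"
    then have "(fst p + u, snd p + v) \<in> L" using p assms(2) by (auto simp: algebra_simps)
    then show "(u, v) \<in> dir L" unfolding dir_def using p by force
  qed
qed

lemma line_mem_iff_dir:
  assumes "is_line L" "p \<in> L"
  shows "q \<in> L \<longleftrightarrow> (fst q - fst p, snd q - snd p) \<in> dir L"
proof -
  obtain a b c where ab: "(a, b) \<noteq> ((0::real), (0::real))" and L: "L = {(x, y). a * x + b * y = c}"
    using assms(1) unfolding is_line_def by blast
  have "a * fst p + b * snd p = c" using assms(2) L by (cases p) auto
  then show ?thesis
    using L dir_line[OF ab L] by (cases q) (auto simp: algebra_simps)
qed

lemma parallel_lines_eq:
  assumes "is_line L" "is_line L'" "dir L = dir L'" "p \<in> L" "p \<in> L'"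
  shows "L = L'"
  using line_mem_iff_dir[OF assms(1,4)] line_mem_iff_dir[OF assms(2,5)] assms(3) by blast

lemma kernel_subset_if_det_zero:
  assumes "(a, b) \<noteq> ((0::real), (0::real))" "a * b' - a' * b = 0"
  shows "{(u, v). a * u + b * v = 0} \<subseteq> {(u, v). a' * u + b' * v = 0}"
proof clarify
  fix u v :: real assume uv: "a * u + b * v = 0"
  have "a * (a' * u + b' * v) = 0" "b * (a' * u + b' * v) = 0"
    using uv assms(2) by algebra+
  then show "a' * u + b' * v = 0" using assms(1) by auto
qed

lemma nonparallel_lines_meet:
  assumes "is_line L" "is_line L'" "dir L \<noteq> dir L'"
  obtains p where "p \<in> L" "p \<in> L'"
proof -
  obtain a b c where ab: "(a, b) \<noteq> ((0::real), (0::real))" and L: "L = {(x, y). a * x + b * y = c}"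
    using assms(1) unfolding is_line_def by blast
  obtain a' b' c' where ab': "(a', b') \<noteq> ((0::real), (0::real))"
    and L': "L' = {(x, y). a' * x + b' * y = c'}"
    using assms(2) unfolding is_line_def by blast
  define det where "det = a * b' - a' * b"
  have "det \<noteq> 0"
  proof
    assume "det = 0"
    then have "a * b' - a' * b = 0" "a' * b - a * b' = 0" unfolding det_def by simp_all
    then have "dir L = dir L'"
      unfolding dir_line[OF ab L] dir_line[OF ab' L']
      using kernel_subset_if_det_zero[OF ab] kernel_subset_if_det_zero[OF ab'] by (intro equalityI)
    then show False using assms(3) by contradiction
  qed
  \<comment> \<open>Cramer's rule\<close>
  define x where "x = (c * b' - c' * b) / det"
  define y where "y = (a * c' - a' * c) / det"
  have "a * (c * b' - c' * b) + b * (a * c' - a' * c) = c * det"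
    and "a' * (c * b' - c' * b) + b' * (a * c' - a' * c) = c' * det"
    unfolding det_def by algebra+
  then have "a * x + b * y = c" "a' * x + b' * y = c'"
    using \<open>det \<noteq> 0\<close> unfolding x_def y_def by (simp_all add: add_divide_distrib[symmetric])
  then show ?thesis using that[of "(x, y)"] L L' by auto
qed

lemma cnt_eq_0_iff: "finite U \<Longrightarrow> cnt U D = 0 \<longleftrightarrow> (\<forall>L\<in>U. dir L \<noteq> D)"
  unfolding cnt_def by auto

lemma cnt_Diff_singleton:
  assumes "finite U" "L \<in> U"
  shows "cnt (U - {L}) D = cnt U D - (if dir L = D then 1 else 0)"
proof -
  have "{L' \<in> U - {L}. dir L' = D} = {L' \<in> U. dir L' = D} - {L}" by auto
  then show ?thesis unfolding cnt_def using assms by auto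
qed

lemma card_eq_cnt_sum:
  assumes "finite U" "\<forall>L\<in>U. dir L \<in> {D1, D2, D3}" "distinct [D1, D2, D3]"
  shows "card U = cnt U D1 + cnt U D2 + cnt U D3"
proof -
  let ?C = "\<lambda>D. {L \<in> U. dir L = D}"
  have "U = (?C D1 \<union> ?C D2) \<union> ?C D3" using assms(2) by auto
  then have "card U = card (?C D1 \<union> ?C D2) + card (?C D3)"
    using assms(1,3) card_Un_disjoint[of "?C D1 \<union> ?C D2" "?C D3"] by auto
  also have "card (?C D1 \<union> ?C D2) = card (?C D1) + card (?C D2)"
    using assms(1,3) by (intro card_Un_disjoint) auto
  finally show ?thesis unfolding cnt_def .
qed

subsection \<open>Lower bounds for hitting sets\<close>

lemma cnt_le_card_hitting_set:
  assumes "\<forall>L\<in>S. is_line L" "hitting_set H S"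
  shows "cnt S D \<le> card H"
proof -
  define h where "h L = (SOME p. p \<in> H \<inter> L)" for L :: "point set"
  have h: "h L \<in> H \<inter> L" if "L \<in> S" for L
    unfolding h_def using assms(2) that by (metis hitting_set_def some_in_eq)
  \<comment> \<open>parallel lines are disjoint, so h is injective on a slope class\<close>
  have "inj_on h {L \<in> S. dir L = D}"
    using h assms(1) parallel_lines_eq by (intro inj_onI) (metis (mono_tags, lifting) IntE mem_Collect_eq)
  moreover have "h ` {L \<in> S. dir L = D} \<subseteq> H" using h by auto
  ultimately show ?thesis
    unfolding cnt_def using assms(2) card_inj_on_le hitting_set_def by blast
qed

lemma card_le_card_hitting_set:
  assumes "finite S" "hitting_set H S" "\<forall>p. card {L \<in> S. p \<in> L} \<le> k"
  shows "card S \<le> k * card H"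
proof -
  have fH: "finite H" using assms(2) unfolding hitting_set_def by blast
  have "S \<subseteq> (\<Union>p\<in>H. {L \<in> S. p \<in> L})" using assms(2) unfolding hitting_set_def by auto
  then have "card S \<le> card (\<Union>p\<in>H. {L \<in> S. p \<in> L})"
    using fH assms(1) by (intro card_mono) auto
  also have "\<dots> \<le> (\<Sum>p\<in>H. card {L \<in> S. p \<in> L})" using fH by (rule card_UN_le)
  also have "\<dots> \<le> (\<Sum>p\<in>H. k)" using assms(3) by (intro sum_mono) auto
  finally show ?thesis by (simp add: mult.commute)
qed

subsection \<open>The optimum as a symmetric function of the class sizes\<close>

definition hit_bound :: "nat \<Rightarrow> nat \<Rightarrow> nat \<Rightarrow> nat" where
  "hit_bound a b c = max (max a (max b c)) ((a + b + c + 1) div 2)"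

lemma OPT2_eq_hit_bound: "z \<le> y \<Longrightarrow> y \<le> x \<Longrightarrow> OPT2 x y z = hit_bound x y z"
proof -
  assume "z \<le> y" "y \<le> x"
  have half: "nat \<lceil>real n / 2\<rceil> = (n + 1) div 2" for n :: nat
  proof (cases "even n")
    case True
    then show ?thesis by auto
  next
    case False
    then obtain k where k: "n = 2 * k + 1" using oddE by blast
    then have "\<lceil>real n / 2\<rceil> = int k + 1" by (simp add: ceiling_eq_iff)
    then show ?thesis using k by simp
  qed
  show ?thesis unfolding OPT2_def hit_bound_def half using \<open>z \<le> y\<close> \<open>y \<le> x\<close> by auto
qed

lemma hit_bound_swap12: "hit_bound a b c = hit_bound b a c"
  and hit_bound_swap23: "hit_bound a b c = hit_bound a c b"
  unfolding hit_bound_def by (simp_all add: ac_simps max.left_commute)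

lemma hit_bound_perm:
  assumes "Da \<in> {D1, D2, D3}" "Db \<in> {D1, D2, D3}" "Dc \<in> {D1, D2, D3}" "distinct [Da, Db, Dc]"
  shows "hit_bound (f D1) (f D2) (f D3) = hit_bound (f Da) (f Db) (f Dc)"
  using assms hit_bound_swap12 hit_bound_swap23 by auto

lemma hit_bound_diff_two_largest:
  "1 \<le> a \<Longrightarrow> 1 \<le> b \<Longrightarrow> c \<le> a \<Longrightarrow> c \<le> b \<Longrightarrow> hit_bound (a - 1) (b - 1) c + 1 = hit_bound a b c"
  unfolding hit_bound_def max_def by simp linarith

lemma hit_bound_single_class:
  "a = 0 \<or> b = 0 \<Longrightarrow> a = 0 \<or> c = 0 \<Longrightarrow> b = 0 \<or> c = 0 \<Longrightarrow> hit_bound a b c = a + b + c"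
  unfolding hit_bound_def by auto

lemma two_largest_classes:
  fixes f :: "'a \<Rightarrow> nat"
  assumes "distinct [D1, D2, D3]"
  obtains Da Db Dc where "{Da, Db, Dc} = {D1, D2, D3}" "distinct [Da, Db, Dc]"
    "f Dc \<le> f Da" "f Dc \<le> f Db"
proof (cases "f D3 \<le> f D1 \<and> f D3 \<le> f D2")
  case True
  then show ?thesis using that[of D1 D2 D3] assms by auto
next
  case False
  show ?thesis
  proof (cases "f D2 \<le> f D1 \<and> f D2 \<le> f D3")
    case True
    then show ?thesis using that[of D1 D3 D2] assms by (auto simp: insert_commute)
  next
    case False
    then show ?thesis
      using \<open>\<not> (f D3 \<le> f D1 \<and> f D3 \<le> f D2)\<close> that[of D2 D3 D1] assms by (auto simp: insert_commute)
  qed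
qed

lemma two_largest_nonzero:
  fixes f :: "'a \<Rightarrow> nat"
  assumes "distinct [Da, Db, Dc]" "f Dc \<le> f Da" "f Dc \<le> f Db"
    and "E1 \<in> {Da, Db, Dc}" "E2 \<in> {Da, Db, Dc}" "E1 \<noteq> E2" "f E1 \<noteq> 0" "f E2 \<noteq> 0"
  shows "f Da \<noteq> 0" "f Db \<noteq> 0"
  using assms by auto

locale three_slope_lines =
  fixes S :: "point set set" and D1 D2 D3 :: "point set"
  assumes finite_lines: "finite S"
    and lines: "\<forall>L\<in>S. is_line L"
    and distinct_slopes: "distinct [D1, D2, D3]"
    and slopes: "\<forall>L\<in>S. dir L \<in> {D1, D2, D3}"
    and no_triple_point: "\<forall>p. card {L \<in> S. p \<in> L} \<le> 2"
begin

definition opt_bound :: "point set set \<Rightarrow> nat" where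
  "opt_bound U = hit_bound (cnt U D1) (cnt U D2) (cnt U D3)"

lemma crossing_lines_not_parallel:
  "L1 \<in> S \<Longrightarrow> L2 \<in> S \<Longrightarrow> L1 \<noteq> L2 \<Longrightarrow> p \<in> L1 \<Longrightarrow> p \<in> L2 \<Longrightarrow> dir L1 \<noteq> dir L2"
  using parallel_lines_eq[of L1 L2 p] lines by blast

lemma not_on_third_line:
  assumes "L1 \<in> S" "L2 \<in> S" "L \<in> S" "L1 \<noteq> L2" "L \<noteq> L1" "L \<noteq> L2" "p \<in> L1" "p \<in> L2"
  shows "p \<notin> L"
proof
  assume "p \<in> L"
  then have "{L1, L2, L} \<subseteq> {L \<in> S. p \<in> L}" using assms by auto
  then have "card {L1, L2, L} \<le> card {L \<in> S. p \<in> L}"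
    using finite_lines by (intro card_mono) auto
  also have "\<dots> \<le> 2" using no_triple_point by blast
  finally show False using assms(4-6) by auto
qed

lemma opt_bound_le_card_hitting_set:
  assumes "hitting_set H S"
  shows "opt_bound S \<le> card H"
proof -
  have "card S \<le> 2 * card H"
    using card_le_card_hitting_set[OF finite_lines assms] no_triple_point by blast
  then have "(cnt S D1 + cnt S D2 + cnt S D3 + 1) div 2 \<le> card H"
    using card_eq_cnt_sum[OF finite_lines slopes distinct_slopes] by linarith
  then show ?thesis
    unfolding opt_bound_def hit_bound_def
    using cnt_le_card_hitting_set[OF lines assms] by simp
qed

lemma opt_bound_Diff_crossing_pair:
  assumes "U \<subseteq> S" "L1 \<in> U" "L2 \<in> U" "dir L1 \<noteq> dir L2"
    and largest: "\<forall>D\<in>{D1, D2, D3}. D \<noteq> dir L1 \<longrightarrow> D \<noteq> dir L2 \<longrightarrow>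
                    cnt U D \<le> cnt U (dir L1) \<and> cnt U D \<le> cnt U (dir L2)"
  shows "opt_bound (U - {L1, L2}) + 1 = opt_bound U"
proof -
  have fU: "finite U" using assms(1) finite_lines finite_subset by blast
  have in3: "dir L1 \<in> {D1, D2, D3}" "dir L2 \<in> {D1, D2, D3}" using slopes assms(1-3) by auto
  then obtain Dc where Dc: "Dc \<in> {D1, D2, D3}" "distinct [dir L1, dir L2, Dc]"
    using distinct_slopes assms(4) by auto
  have pos: "1 \<le> cnt U (dir L1)" "1 \<le> cnt U (dir L2)"
    using cnt_eq_0_iff[OF fU] assms(2,3) by (metis less_one not_le)+
  have "U - {L1, L2} = U - {L1} - {L2}" "L2 \<in> U - {L1}" using assms(2-4) by auto
  then have removed: "cnt (U - {L1, L2}) D =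
      cnt U D - (if dir L1 = D then 1 else 0) - (if dir L2 = D then 1 else 0)" for D
    using cnt_Diff_singleton fU assms(2) by (metis finite_Diff)
  have "opt_bound (U - {L1, L2}) =
      hit_bound (cnt (U - {L1, L2}) (dir L1)) (cnt (U - {L1, L2}) (dir L2)) (cnt (U - {L1, L2}) Dc)"
    unfolding opt_bound_def by (rule hit_bound_perm[OF in3 Dc])
  also have "\<dots> = hit_bound (cnt U (dir L1) - 1) (cnt U (dir L2) - 1) (cnt U Dc)"
    using Dc(2) by (auto simp: removed)
  moreover have "opt_bound U = hit_bound (cnt U (dir L1)) (cnt U (dir L2)) (cnt U Dc)"
    unfolding opt_bound_def by (rule hit_bound_perm[OF in3 Dc])
  moreover have "cnt U Dc \<le> cnt U (dir L1)" "cnt U Dc \<le> cnt U (dir L2)"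
    using largest Dc by auto
  then have "hit_bound (cnt U (dir L1) - 1) (cnt U (dir L2) - 1) (cnt U Dc) + 1 =
      hit_bound (cnt U (dir L1)) (cnt U (dir L2)) (cnt U Dc)"
    using pos by (rule_tac hit_bound_diff_two_largest) auto
  ultimately show ?thesis by presburger
qed

lemma opt_bound_no_crossing:
  assumes "U \<subseteq> S" "\<not> (\<exists>p L1 L2. L1 \<in> U \<and> L2 \<in> U \<and> L1 \<noteq> L2 \<and> p \<in> L1 \<and> p \<in> L2)"
  shows "opt_bound U = card U"
proof -
  have fU: "finite U" using assms(1) finite_lines finite_subset by blast
  have one_empty: "cnt U D = 0 \<or> cnt U D' = 0" if "D \<noteq> D'" for D D'
  proof (rule ccontr)
    assume "\<not> ?thesis"
    then obtain L L' where L: "L \<in> U" "dir L = D" and L': "L' \<in> U" "dir L' = D'"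
      unfolding cnt_eq_0_iff[OF fU] by blast
    then have "is_line L" "is_line L'" "dir L \<noteq> dir L'" using assms(1) lines that by auto
    then obtain p where "p \<in> L" "p \<in> L'" by (rule nonparallel_lines_meet)
    then show False using assms(2) L L' \<open>dir L \<noteq> dir L'\<close> by blast
  qed
  have "card U = cnt U D1 + cnt U D2 + cnt U D3"
    using card_eq_cnt_sum[OF fU _ distinct_slopes] assms(1) slopes by blast
  moreover have "opt_bound U = cnt U D1 + cnt U D2 + cnt U D3"
    unfolding opt_bound_def using distinct_slopes by (intro hit_bound_single_class one_empty) simp_all
  ultimately show ?thesis by simp
qed

lemma greedy_run_correct:
  assumes "greedy_run S U H Out" "U \<subseteq> S" "finite H"
    and "\<forall>L\<in>S - U. H \<inter> L \<noteq> {}" "\<forall>L\<in>U. H \<inter> L = {}"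
  shows "hitting_set Out S \<and> card Out = card H + opt_bound U"
  using assms
proof (induction rule: greedy_run.induct)
  case (finish U f H)
  have fU: "finite U" using finish.prems(1) finite_lines finite_subset by blast
  have "inj_on f U"
    using finish.hyps by (intro inj_onI) (metis IntI empty_iff)
  moreover have "H \<inter> f ` U = {}" using finish.hyps(2) finish.prems(4) by blast
  ultimately have "card (H \<union> f ` U) = card H + card U"
    using fU finish.prems(2) by (simp add: card_Un_disjoint card_image)
  moreover have "hitting_set (H \<union> f ` U) S"
    unfolding hitting_set_def using finish.prems(2,3) finish.hyps(2) fU by blast
  ultimately show ?case using opt_bound_no_crossing[OF finish.prems(1) finish.hyps(1)] by simp
next
  case (step L1 U L2 p H Out)
  have fU: "finite U" using step.prems(1) finite_lines finite_subset by blast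
  have "L1 \<in> S" "L2 \<in> S" using step.hyps(1,2) step.prems(1) by auto
  have off_rest: "p \<notin> L" if "L \<in> U - {L1, L2}" for L
    using that step.prems(1) step.hyps(3-5)
    by (intro not_on_third_line[OF \<open>L1 \<in> S\<close> \<open>L2 \<in> S\<close>]) auto
  have "hitting_set Out S \<and> card Out = card (insert p H) + opt_bound (U - {L1, L2})"
    using step.prems step.hyps(4,5) off_rest by (intro step.IH) auto
  moreover have "p \<notin> H" using step.prems(4) step.hyps(1,4) by blast
  moreover have "opt_bound (U - {L1, L2}) + 1 = opt_bound U"
  proof (rule opt_bound_Diff_crossing_pair)
    show "dir L1 \<noteq> dir L2"
      by (rule crossing_lines_not_parallel[OF \<open>L1 \<in> S\<close> \<open>L2 \<in> S\<close> step.hyps(3-5)])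
    show "\<forall>D\<in>{D1, D2, D3}. D \<noteq> dir L1 \<longrightarrow> D \<noteq> dir L2 \<longrightarrow>
        cnt U D \<le> cnt U (dir L1) \<and> cnt U D \<le> cnt U (dir L2)"
    proof (intro ballI impI)
      fix D assume "D \<noteq> dir L1" "D \<noteq> dir L2"
      show "cnt U D \<le> cnt U (dir L1) \<and> cnt U D \<le> cnt U (dir L2)"
      proof (cases "D \<in> dir ` S")
        case True
        then show ?thesis using step.hyps(6) \<open>D \<noteq> dir L1\<close> \<open>D \<noteq> dir L2\<close> by blast
      next
        case False
        then have "cnt U D = 0" using step.prems(1) cnt_eq_0_iff[OF fU] by blast
        then show ?thesis by simp
      qed
    qed
  qed (use step.hyps(1,2) step.prems(1) in auto)
  ultimately show ?case using step.prems(2) by simp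
qed

lemma greedy_run_exists: "U \<subseteq> S \<Longrightarrow> \<exists>Out. greedy_run S U H Out"
proof (induction "card U" arbitrary: U H rule: less_induct)
  case less
  have fU: "finite U" using less.prems finite_lines finite_subset by blast
  show ?case
  proof (cases "\<exists>p L1 L2. L1 \<in> U \<and> L2 \<in> U \<and> L1 \<noteq> L2 \<and> p \<in> L1 \<and> p \<in> L2")
    case False
    have "\<forall>L\<in>U. (SOME p. p \<in> L) \<in> L"
    proof
      fix L assume "L \<in> U"
      then have "is_line L" using less.prems lines by blast
      then show "(SOME p. p \<in> L) \<in> L" by (simp add: some_in_eq line_nonempty)
    qed
    then show ?thesis using greedy_run.finish[OF False, where f = "\<lambda>L. SOME p. p \<in> L"] by blast
  next
    case True
    then obtain p L1 L2 where L12: "L1 \<in> U" "L2 \<in> U" "L1 \<noteq> L2" "p \<in> L1" "p \<in> L2" by blast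
    then have "L1 \<in> S" "L2 \<in> S" using less.prems by blast+
    have "dir L1 \<noteq> dir L2"
      by (rule crossing_lines_not_parallel[OF \<open>L1 \<in> S\<close> \<open>L2 \<in> S\<close> L12(3-5)])
    have "dir L1 \<in> {D1, D2, D3}" "dir L2 \<in> {D1, D2, D3}"
      using slopes \<open>L1 \<in> S\<close> \<open>L2 \<in> S\<close> by blast+
    obtain Da Db Dc where classes: "{Da, Db, Dc} = {D1, D2, D3}" "distinct [Da, Db, Dc]"
      and Dc_min: "cnt U Dc \<le> cnt U Da" "cnt U Dc \<le> cnt U Db"
      using two_largest_classes[OF distinct_slopes, of "cnt U"] by metis
    have "dir L1 \<in> {Da, Db, Dc}" "dir L2 \<in> {Da, Db, Dc}"
      unfolding classes(1) by fact+
    moreover have "cnt U (dir L1) \<noteq> 0" "cnt U (dir L2) \<noteq> 0"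
      using cnt_eq_0_iff[OF fU] L12(1,2) by blast+
    ultimately have "cnt U Da \<noteq> 0" "cnt U Db \<noteq> 0"
      using two_largest_nonzero[OF classes(2) Dc_min _ _ \<open>dir L1 \<noteq> dir L2\<close>] by simp_all
    then obtain M1 M2 where M: "M1 \<in> U" "dir M1 = Da" "M2 \<in> U" "dir M2 = Db"
      unfolding cnt_eq_0_iff[OF fU] by blast
    then have "is_line M1" "is_line M2" "dir M1 \<noteq> dir M2"
      using lines less.prems classes(2) by auto
    then obtain q where q: "q \<in> M1" "q \<in> M2" by (rule nonparallel_lines_meet)
    have "M1 \<noteq> M2" using \<open>dir M1 \<noteq> dir M2\<close> by blast
    have largest: "\<forall>D\<in>dir ` S. D \<noteq> dir M1 \<longrightarrow> D \<noteq> dir M2 \<longrightarrow>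
        cnt U D \<le> cnt U (dir M1) \<and> cnt U D \<le> cnt U (dir M2)"
    proof (intro ballI impI)
      fix D assume "D \<in> dir ` S" "D \<noteq> dir M1" "D \<noteq> dir M2"
      then have "D \<in> {Da, Db, Dc}" unfolding classes(1) using slopes by blast
      then have "D = Dc" using \<open>D \<noteq> dir M1\<close> \<open>D \<noteq> dir M2\<close> M(2,4) by blast
      then show "cnt U D \<le> cnt U (dir M1) \<and> cnt U D \<le> cnt U (dir M2)" using Dc_min M(2,4) by simp
    qed
    have "U - {M1, M2} = U - {M1} - {M2}" by blast
    then have "card (U - {M1, M2}) < card U" using card_Diff2_less[OF fU M(1,3)] by simp
    moreover have "U - {M1, M2} \<subseteq> S" using less.prems by blast
    ultimately have "\<exists>Out. greedy_run S (U - {M1, M2}) (insert q H) Out" by (rule less.hyps)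
    then show ?thesis using greedy_run.step[OF M(1,3) \<open>M1 \<noteq> M2\<close> q largest] by blast
  qed
qed

end

theorem mainTheorem3:
  fixes S :: "point set set" and D1 D2 D3 :: "point set" and x y z :: nat
  assumes "finite S"
    and "\<forall>L\<in>S. is_line L"
    and "D1 \<noteq> D2" and "D1 \<noteq> D3" and "D2 \<noteq> D3"
    and "\<forall>L\<in>S. dir L \<in> {D1, D2, D3}"
    and "\<forall>p. card {L \<in> S. p \<in> L} \<le> 2"
    and "x = cnt S D1" and "y = cnt S D2" and "z = cnt S D3"
    and "x \<ge> y" and "y \<ge> z"
  shows "(\<exists>H. hitting_set H S \<and> card H = OPT2 x y z)
       \<and> (\<forall>H. hitting_set H S \<longrightarrow> OPT2 x y z \<le> card H)
       \<and> (\<exists>Out. greedy_run S S {} Out)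
       \<and> (\<forall>Out. greedy_run S S {} Out \<longrightarrow> hitting_set Out S \<and> card Out = OPT2 x y z)"
proof -
  interpret three_slope_lines S D1 D2 D3
    using assms(1-7) by unfold_locales auto
  have opt: "OPT2 x y z = opt_bound S"
    unfolding opt_bound_def using OPT2_eq_hit_bound assms(8-12) by simp
  have greedy_optimal: "hitting_set Out S \<and> card Out = OPT2 x y z" if "greedy_run S S {} Out" for Out
    using greedy_run_correct[OF that] opt by simp
  obtain Out where "greedy_run S S {} Out" using greedy_run_exists by blast
  then show ?thesis using greedy_optimal opt_bound_le_card_hitting_set opt by metis
qed

end
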